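(* Let $W\in\mathbb{D}_n$ with $\mathcal{E}=\{1,\dots,m\}$ and $|\mathcal{I}|=k\ge1$, $m+k=n$, satisfying the Ground Assumption. Let $W'\in\mathbb{D}_{m+1}$ be a Dale matrix with excitatory set $\{1,\dots,m\}$ and inhibitory set $\{m+1\}$, such that $W'_{ij}=W_{ij}$ for $i,j\in\mathcal{E}$; for all $i\in\mathcal{E}$, $W'_{i(m+1)}<0$ if and only if the $i$-th row of the submatrix $W_{\mathcal{E}\mathcal{I}}$ (rows $\mathcal{E}$, columns $\mathcal{I}$) is nonzero; and the $(m+1)$-st row of $W'$ is zero. Assume $W'$ satisfies the Ground Assumption. Then $\mathcal{C}(W)=\mathcal{C}(W')$.
   Context: Threshold-linear network: $\dot x_i=-x_i+[\sum_j W_{ij}x_j+b_i]_+$ with $[y]_+=\max(0,y)$; a fixed point is $x^*$ with $x^*=[Wx^*+b]_+$. A Dale matrix $W\in\mathbb{D}_n$ is an $n\times n$ real matrix with a partition $[n]=\mathcal{E}\sqcup\mathcal{I}$ such that $W_{ii}=0$, columns indexed by $\mathcal{E}$ are nonnegative and columns indexed by $\mathcal{I}$ are nonpositive. Ground Assumption: $(I-W)_\sigma$ is nonsingular for every nonempty $\sigma\subset[n]$. Excitatory support: $\mathrm{supp}_+x=\{i\in\mathcal{E}:x_i>0\}$. Combinatorial code: $\mathcal{C}(W)=\{\mathrm{supp}_+x^*: b\in\mathbb{R}^n_{\ge0},\ x^*\in\mathbb{R}^n_{\ge0}\text{ a fixed point of }(W,b)\}$. *)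

theory Defs
  imports Complex_Main "HOL-Combinatorics.Permutations"
begin

text \<open>Matrices are functions nat => nat => real; the index set is [n] = {1..n}.
  Vectors are functions nat => real, only their values on {1..n} matter.\<close>

definition det_on :: "nat set \<Rightarrow> (nat \<Rightarrow> nat \<Rightarrow> real) \<Rightarrow> real" where
  "det_on S A = (\<Sum>p\<in>{p. p permutes S}. of_int (sign p) * (\<Prod>i\<in>S. A i (p i)))"

definition dale_matrix :: "nat \<Rightarrow> nat set \<Rightarrow> (nat \<Rightarrow> nat \<Rightarrow> real) \<Rightarrow> bool" where
  "dale_matrix n E W \<longleftrightarrow> E \<subseteq> {1..n} \<and>
     (\<forall>i\<in>{1..n}. W i i = 0) \<and>
     (\<forall>i\<in>{1..n}. \<forall>j\<in>{1..n}. (j \<in> E \<longrightarrow> W i j \<ge> 0) \<and> (j \<notin> E \<longrightarrow> W i j \<le> 0))"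

definition ground_assumption :: "nat \<Rightarrow> (nat \<Rightarrow> nat \<Rightarrow> real) \<Rightarrow> bool" where
  "ground_assumption n W \<longleftrightarrow>
     (\<forall>\<sigma>. \<sigma> \<noteq> {} \<and> \<sigma> \<subseteq> {1..n} \<longrightarrow>
        det_on \<sigma> (\<lambda>i j. (if i = j then 1 else 0) - W i j) \<noteq> 0)"

definition tln_fixed_point :: "nat \<Rightarrow> (nat \<Rightarrow> nat \<Rightarrow> real) \<Rightarrow> (nat \<Rightarrow> real) \<Rightarrow> (nat \<Rightarrow> real) \<Rightarrow> bool" where
  "tln_fixed_point n W b x \<longleftrightarrow>
     (\<forall>i\<in>{1..n}. x i = max 0 ((\<Sum>j\<in>{1..n}. W i j * x j) + b i))"

definition supp_plus :: "nat set \<Rightarrow> (nat \<Rightarrow> real) \<Rightarrow> nat set" where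
  "supp_plus E x = {i \<in> E. x i > 0}"

definition comb_code :: "nat \<Rightarrow> nat set \<Rightarrow> (nat \<Rightarrow> nat \<Rightarrow> real) \<Rightarrow> nat set set" where
  "comb_code n E W = {supp_plus E x | x b.
      (\<forall>i\<in>{1..n}. b i \<ge> 0) \<and> (\<forall>i\<in>{1..n}. x i \<ge> 0) \<and> tln_fixed_point n W b x}"

end

theory Submission
  imports Defs
begin

text \<open>A set is in the code exactly when it is the excitatory support of a nonnegative x
  with W x \<le> x, because the slack x - W x can serve as the input b. Such supersolutions transfer
  between W and W' by giving every inhibitory neuron one common activity L that is large enough:
  an excitatory row receiving some inhibition is then pushed below its target, an excitatory row
  receiving none does not see L, and an inhibitory row holds because L outgrows its fixed
  excitatory input.\<close>

definition tln_supersolution :: "nat \<Rightarrow> (nat \<Rightarrow> nat \<Rightarrow> real) \<Rightarrow> (nat \<Rightarrow> real) \<Rightarrow> bool" where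
  "tln_supersolution n W x \<longleftrightarrow>
     (\<forall>i\<in>{1..n}. 0 \<le> x i \<and> (\<Sum>j\<in>{1..n}. W i j * x j) \<le> x i)"

lemma comb_code_eq_supersolutions:
  "comb_code n E W = {supp_plus E x | x. tln_supersolution n W x}"
proof (intro set_eqI iffI)
  fix s assume "s \<in> comb_code n E W"
  then obtain x b where s: "s = supp_plus E x" and b: "\<forall>i\<in>{1..n}. b i \<ge> 0"
    and x: "\<forall>i\<in>{1..n}. x i \<ge> 0" and fp: "tln_fixed_point n W b x"
    unfolding comb_code_def by blast
  have "(\<Sum>j\<in>{1..n}. W i j * x j) \<le> x i" if "i \<in> {1..n}" for i
  proof -
    have "x i = max 0 ((\<Sum>j\<in>{1..n}. W i j * x j) + b i)"
      using fp that unfolding tln_fixed_point_def by blast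
    with b that show ?thesis by fastforce
  qed
  with x have "tln_supersolution n W x" unfolding tln_supersolution_def by blast
  with s show "s \<in> {supp_plus E x | x. tln_supersolution n W x}" by blast
next
  fix s assume "s \<in> {supp_plus E x | x. tln_supersolution n W x}"
  then obtain x where s: "s = supp_plus E x" and x: "tln_supersolution n W x" by blast
  define b where "b i = x i - (\<Sum>j\<in>{1..n}. W i j * x j)" for i
  have "\<forall>i\<in>{1..n}. b i \<ge> 0" "\<forall>i\<in>{1..n}. x i \<ge> 0" "tln_fixed_point n W b x"
    using x unfolding tln_supersolution_def tln_fixed_point_def b_def by auto
  with s show "s \<in> comb_code n E W" unfolding comb_code_def by blast
qed

lemma supp_plus_cong: "\<forall>i\<in>E. x i = y i \<Longrightarrow> supp_plus E x = supp_plus E y"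
  unfolding supp_plus_def by auto

lemma comb_code_subsetI:
  assumes "\<And>x. tln_supersolution n W x \<Longrightarrow> \<exists>y. tln_supersolution n' W' y \<and> (\<forall>i\<in>E. y i = x i)"
  shows "comb_code n E W \<subseteq> comb_code n' E W'"
proof
  fix s assume "s \<in> comb_code n E W"
  then obtain x where s: "s = supp_plus E x" and x: "tln_supersolution n W x"
    unfolding comb_code_eq_supersolutions by blast
  obtain y where y: "tln_supersolution n' W' y" and "\<forall>i\<in>E. y i = x i"
    using assms[OF x] by blast
  from this(2) have "supp_plus E y = s" unfolding s by (rule supp_plus_cong)
  with y show "s \<in> comb_code n' E W'" unfolding comb_code_eq_supersolutions by blast
qed

lemma eventually_affine_nonpos_at_top:
  fixes a s :: "'i \<Rightarrow> real"
  assumes "finite I" and "\<And>i. i \<in> I \<Longrightarrow> s i < 0 \<or> (s i \<le> 0 \<and> a i \<le> 0)"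
  shows "\<forall>\<^sub>F L in at_top. \<forall>i\<in>I. a i + s i * L \<le> 0"
proof (rule eventually_ball_finite[OF \<open>finite I\<close>], intro ballI)
  fix i assume "i \<in> I"
  consider "s i < 0" | "s i \<le> 0" "a i \<le> 0" using assms(2)[OF \<open>i \<in> I\<close>] by blast
  then show "\<forall>\<^sub>F L in at_top. a i + s i * L \<le> 0"
  proof cases
    case 1
    show ?thesis
      using eventually_ge_at_top[of "a i / - s i"]
    proof eventually_elim
      case (elim L)
      then have "a i \<le> L * - s i" using 1 pos_divide_le_eq[of "- s i" "a i" L] by linarith
      then show ?case by (simp add: algebra_simps)
    qed
  next
    case 2
    show ?thesis
      using eventually_ge_at_top[of "0::real"]
    proof eventually_elim
      case (elim L)
      then have "s i * L \<le> 0" using 2 by (simp add: mult_nonpos_nonneg)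
      then show ?case using 2 by linarith
    qed
  qed
qed

lemma eventually_at_top_nonneg_witness:
  assumes "\<forall>\<^sub>F L in at_top. P (L::real)"
  obtains L where "0 \<le> L" and "P L"
proof -
  have "\<forall>\<^sub>F L in at_top. 0 \<le> L \<and> P L"
    using eventually_ge_at_top assms by (rule eventually_conj)
  then show ?thesis
    using eventually_happens'[OF trivial_limit_at_top_linorder] that by blast
qed

lemma sum_split_at:
  fixes f :: "nat \<Rightarrow> 'a::comm_monoid_add"
  assumes "m \<le> n"
  shows "(\<Sum>j\<in>{1..n}. f j) = (\<Sum>j\<in>{1..m}. f j) + (\<Sum>j\<in>{m+1..n}. f j)"
proof -
  have "{1..n} = {1..m} \<union> {m+1..n}" using assms by auto
  then show ?thesis by (simp add: sum.union_disjoint)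
qed

lemma sum_extend_by_const:
  fixes w y :: "nat \<Rightarrow> real"
  assumes "m \<le> n"
  shows "(\<Sum>j\<in>{1..n}. w j * (if j \<le> m then y j else c))
       = (\<Sum>j\<in>{1..m}. w j * y j) + (\<Sum>j\<in>{m+1..n}. w j) * c"
proof -
  have "(\<Sum>j\<in>{1..n}. w j * (if j \<le> m then y j else c))
      = (\<Sum>j\<in>{1..m}. w j * (if j \<le> m then y j else c))
      + (\<Sum>j\<in>{m+1..n}. w j * (if j \<le> m then y j else c))"
    by (rule sum_split_at[OF assms])
  also have "\<dots> = (\<Sum>j\<in>{1..m}. w j * y j) + (\<Sum>j\<in>{m+1..n}. w j * c)"
    by (intro arg_cong2[where f = "(+)"] sum.cong) auto
  finally show ?thesis by (simp add: sum_distrib_right)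
qed

lemma eventually_merged_rows_nonpos:
  fixes W W' :: "nat \<Rightarrow> nat \<Rightarrow> real"
  assumes "m \<le> n" and "tln_supersolution n W x"
    and inhibits: "\<forall>i\<in>{1..m}. W' i (m+1) \<le> 0"
    and uninhibited: "\<forall>i\<in>{1..m}. W' i (m+1) = 0 \<longrightarrow> (\<forall>j\<in>{m+1..n}. W i j = 0)"
  shows "\<forall>\<^sub>F L in at_top. \<forall>i\<in>{1..m}. (\<Sum>j\<in>{1..m}. W i j * x j) - x i + W' i (m+1) * L \<le> 0"
proof (rule eventually_affine_nonpos_at_top)
  fix i assume i: "i \<in> {1..m}"
  have "i \<in> {1..n}" using i \<open>m \<le> n\<close> by simp
  then have "(\<Sum>j\<in>{1..n}. W i j * x j) \<le> x i"
    using assms(2) unfolding tln_supersolution_def by blast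
  then have "(\<Sum>j\<in>{1..m}. W i j * x j) + (\<Sum>j\<in>{m+1..n}. W i j * x j) \<le> x i"
    unfolding sum_split_at[OF \<open>m \<le> n\<close>] .
  moreover have "(\<Sum>j\<in>{m+1..n}. W i j * x j) = 0" if "W' i (m+1) = 0"
    using uninhibited i that by simp
  ultimately show "W' i (m+1) < 0 \<or> (W' i (m+1) \<le> 0 \<and> (\<Sum>j\<in>{1..m}. W i j * x j) - x i \<le> 0)"
    using inhibits i by force
qed simp

lemma tln_supersolution_merge_inhibitory:
  fixes W W' :: "nat \<Rightarrow> nat \<Rightarrow> real"
  assumes "m \<le> n" and "tln_supersolution n W x"
    and agree: "\<forall>i\<in>{1..m}. \<forall>j\<in>{1..m}. W' i j = W i j"
    and inhibits: "\<forall>i\<in>{1..m}. W' i (m+1) \<le> 0"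
    and uninhibited: "\<forall>i\<in>{1..m}. W' i (m+1) = 0 \<longrightarrow> (\<forall>j\<in>{m+1..n}. W i j = 0)"
    and silent: "\<forall>j\<in>{1..m+1}. W' (m+1) j = 0"
  shows "\<exists>y. tln_supersolution (m+1) W' y \<and> (\<forall>i\<in>{1..m}. y i = x i)"
proof -
  define e where "e i = (\<Sum>j\<in>{1..m}. W i j * x j)" for i
  obtain L where "0 \<le> L" and L: "\<forall>i\<in>{1..m}. e i - x i + W' i (m+1) * L \<le> 0"
    using eventually_merged_rows_nonpos[where W' = W', OF assms(1,2) inhibits uninhibited]
    unfolding e_def by (rule eventually_at_top_nonneg_witness)
  define y where "y j = (if j \<le> m then x j else L)" for j
  have row: "(\<Sum>j\<in>{1..m+1}. W' i j * y j) = (\<Sum>j\<in>{1..m}. W' i j * x j) + W' i (m+1) * L" for i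
    using sum_extend_by_const[of m "m+1" "W' i" x L] by (simp add: y_def)
  have "tln_supersolution (m+1) W' y"
    unfolding tln_supersolution_def
  proof
    fix i assume i: "i \<in> {1..m+1}"
    show "0 \<le> y i \<and> (\<Sum>j\<in>{1..m+1}. W' i j * y j) \<le> y i"
    proof (cases "i \<le> m")
      case True
      with i have i': "i \<in> {1..m}" and "i \<in> {1..n}" using \<open>m \<le> n\<close> by auto
      have "(\<Sum>j\<in>{1..m}. W' i j * x j) = e i"
        unfolding e_def using agree i' by (intro sum.cong) auto
      moreover have "0 \<le> x i"
        using assms(2) \<open>i \<in> {1..n}\<close> unfolding tln_supersolution_def by blast
      moreover have "e i - x i + W' i (m+1) * L \<le> 0" using L i' by blast
      ultimately show ?thesis using True unfolding row y_def by simp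
    next
      case False
      with i have "i = m+1" by simp
      then have "(\<Sum>j\<in>{1..m}. W' i j * x j) = 0" and "W' i (m+1) = 0"
        using silent by simp_all
      then show ?thesis using False \<open>0 \<le> L\<close> unfolding row by (simp add: y_def)
    qed
  qed
  then show ?thesis unfolding y_def by auto
qed

lemma eventually_split_rows_nonpos:
  fixes W W' :: "nat \<Rightarrow> nat \<Rightarrow> real"
  assumes "m \<le> n" and "tln_supersolution (m+1) W' y"
    and agree: "\<forall>i\<in>{1..m}. \<forall>j\<in>{1..m}. W' i j = W i j"
    and inhibitory: "\<forall>i\<in>{1..n}. \<forall>j\<in>{m+1..n}. W i j \<le> 0"
    and inhibits: "\<forall>i\<in>{1..m}. W' i (m+1) \<le> 0"
    and inhibited: "\<forall>i\<in>{1..m}. W' i (m+1) < 0 \<longrightarrow> (\<exists>j\<in>{m+1..n}. W i j \<noteq> 0)"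
  shows "\<forall>\<^sub>F L in at_top. \<forall>i\<in>{1..m}.
           (\<Sum>j\<in>{1..m}. W i j * y j) - y i + (\<Sum>j\<in>{m+1..n}. W i j) * L \<le> 0"
proof (rule eventually_affine_nonpos_at_top)
  fix i assume i: "i \<in> {1..m}"
  then have "i \<in> {1..n}" using \<open>m \<le> n\<close> by simp
  have inh_nonpos: "(\<Sum>j\<in>{m+1..n}. W i j) \<le> 0"
    using inhibitory \<open>i \<in> {1..n}\<close> by (intro sum_nonpos) auto
  have "(\<Sum>j\<in>{1..m}. W' i j * y j) = (\<Sum>j\<in>{1..m}. W i j * y j)"
    using agree i by (intro sum.cong) auto
  moreover have "(\<Sum>j\<in>{1..m+1}. W' i j * y j) \<le> y i"
    using assms(2) i unfolding tln_supersolution_def by simp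
  ultimately have row: "(\<Sum>j\<in>{1..m}. W i j * y j) + W' i (m+1) * y (m+1) \<le> y i" by simp
  show "(\<Sum>j\<in>{m+1..n}. W i j) < 0 \<or>
        ((\<Sum>j\<in>{m+1..n}. W i j) \<le> 0 \<and> (\<Sum>j\<in>{1..m}. W i j * y j) - y i \<le> 0)"
  proof (cases "W' i (m+1) < 0")
    case True
    then obtain j where j: "j \<in> {m+1..n}" "W i j \<noteq> 0" using inhibited i by blast
    have "0 < (\<Sum>l\<in>{m+1..n}. - W i l)"
      using j inhibitory \<open>i \<in> {1..n}\<close> by (intro sum_pos2[of _ j]) force+
    then show ?thesis by (simp add: sum_negf)
  next
    case False
    then have "W' i (m+1) = 0" using inhibits i by force
    with row inh_nonpos show ?thesis by simp
  qed
qed simp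

lemma tln_supersolution_split_inhibitory:
  fixes W W' :: "nat \<Rightarrow> nat \<Rightarrow> real"
  assumes "m \<le> n" and "tln_supersolution (m+1) W' y"
    and "\<forall>i\<in>{1..m}. \<forall>j\<in>{1..m}. W' i j = W i j"
    and inhibitory: "\<forall>i\<in>{1..n}. \<forall>j\<in>{m+1..n}. W i j \<le> 0"
    and "\<forall>i\<in>{1..m}. W' i (m+1) \<le> 0"
    and "\<forall>i\<in>{1..m}. W' i (m+1) < 0 \<longrightarrow> (\<exists>j\<in>{m+1..n}. W i j \<noteq> 0)"
  shows "\<exists>x. tln_supersolution n W x \<and> (\<forall>i\<in>{1..m}. x i = y i)"
proof -
  define e where "e i = (\<Sum>j\<in>{1..m}. W i j * y j)" for i
  define inh where "inh i = (\<Sum>j\<in>{m+1..n}. W i j)" for i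
  have inh_nonpos: "inh i \<le> 0" if "i \<in> {1..n}" for i
    unfolding inh_def using inhibitory that by (intro sum_nonpos) auto
  have "\<forall>\<^sub>F L in at_top. \<forall>i\<in>{m+1..n}. e i + (inh i - 1) * L \<le> 0"
  proof (rule eventually_affine_nonpos_at_top)
    fix i assume "i \<in> {m+1..n}"
    then have "inh i \<le> 0" using inh_nonpos by simp
    then show "inh i - 1 < 0 \<or> (inh i - 1 \<le> 0 \<and> e i \<le> 0)" by simp
  qed simp
  moreover note eventually_split_rows_nonpos[OF assms]
  ultimately have "\<forall>\<^sub>F L in at_top. (\<forall>i\<in>{1..m}. e i - y i + inh i * L \<le> 0)
      \<and> (\<forall>i\<in>{m+1..n}. e i + (inh i - 1) * L \<le> 0)"
    unfolding e_def inh_def by eventually_elim blast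
  then obtain L where "0 \<le> L" and L: "\<forall>i\<in>{1..m}. e i - y i + inh i * L \<le> 0"
    "\<forall>i\<in>{m+1..n}. e i + (inh i - 1) * L \<le> 0"
    by (rule eventually_at_top_nonneg_witness) blast
  define x where "x j = (if j \<le> m then y j else L)" for j
  have row: "(\<Sum>j\<in>{1..n}. W i j * x j) = e i + inh i * L" for i
    unfolding x_def e_def inh_def by (rule sum_extend_by_const[OF \<open>m \<le> n\<close>])
  have "tln_supersolution n W x"
    unfolding tln_supersolution_def
  proof
    fix i assume i: "i \<in> {1..n}"
    show "0 \<le> x i \<and> (\<Sum>j\<in>{1..n}. W i j * x j) \<le> x i"
    proof (cases "i \<le> m")
      case True
      with i have i': "i \<in> {1..m}" and "i \<in> {1..m+1}" by auto
      have "0 \<le> y i"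
        using assms(2) \<open>i \<in> {1..m+1}\<close> unfolding tln_supersolution_def by blast
      moreover have "e i - y i + inh i * L \<le> 0" using L(1) i' by blast
      ultimately show ?thesis using True unfolding row by (simp add: x_def)
    next
      case False
      with i have "i \<in> {m+1..n}" by auto
      then have "e i + (inh i - 1) * L \<le> 0" using L(2) by blast
      then show ?thesis using False \<open>0 \<le> L\<close> unfolding row by (simp add: x_def algebra_simps)
    qed
  qed
  then show ?thesis unfolding x_def by auto
qed

theorem mainTheorem3:
  fixes W W' :: "nat \<Rightarrow> nat \<Rightarrow> real" and m k n :: nat
  assumes "k \<ge> 1" and "n = m + k"
    and "dale_matrix n {1..m} W"
    and "ground_assumption n W"
    and "dale_matrix (m + 1) {1..m} W'"
    and "\<forall>i\<in>{1..m}. \<forall>j\<in>{1..m}. W' i j = W i j"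
    and "\<forall>i\<in>{1..m}. W' i (m + 1) < 0 \<longleftrightarrow> (\<exists>j\<in>{m+1..n}. W i j \<noteq> 0)"
    and "\<forall>j\<in>{1..m+1}. W' (m + 1) j = 0"
    and "ground_assumption (m + 1) W'"
  shows "comb_code n {1..m} W = comb_code (m + 1) {1..m} W'"
proof -
  have "m \<le> n" using assms(2) by simp
  have inhibitory: "\<forall>i\<in>{1..n}. \<forall>j\<in>{m+1..n}. W i j \<le> 0"
    using assms(3) unfolding dale_matrix_def by simp
  have inhibits: "\<forall>i\<in>{1..m}. W' i (m+1) \<le> 0"
    using assms(5) unfolding dale_matrix_def by simp
  have uninhibited: "\<forall>i\<in>{1..m}. W' i (m+1) = 0 \<longrightarrow> (\<forall>j\<in>{m+1..n}. W i j = 0)"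
    using assms(7) by auto
  have inhibited: "\<forall>i\<in>{1..m}. W' i (m+1) < 0 \<longrightarrow> (\<exists>j\<in>{m+1..n}. W i j \<noteq> 0)"
    using assms(7) by blast
  have "comb_code n {1..m} W \<subseteq> comb_code (m+1) {1..m} W'"
    using tln_supersolution_merge_inhibitory[OF \<open>m \<le> n\<close> _ assms(6) inhibits uninhibited assms(8)]
    by (rule comb_code_subsetI)
  moreover have "comb_code (m+1) {1..m} W' \<subseteq> comb_code n {1..m} W"
    using tln_supersolution_split_inhibitory[OF \<open>m \<le> n\<close> _ assms(6) inhibitory inhibits inhibited]
    by (rule comb_code_subsetI)
  ultimately show ?thesis by (rule subset_antisym)
qed

end
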